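(* For all non-negative integers $\beta$ and $k$, let $$X := \{(\alpha, l) \in \mathbb{Z}^2 : 0 \leq \alpha \leq \beta,\ 0 \leq l \leq k,\ (\alpha,l) \neq (\beta, k),\ (q-1) \mid (\beta + k -(\alpha + l)) \}.$$ Then $L(\chi_t^0, 0) = 1$, and $$L(\chi_t^\beta,-k) = 1 - \sum_{(\alpha,l) \in X}{\beta \choose \alpha}{k \choose l}t^\alpha \theta^l\, L(\chi_t^\alpha, -l).$$
   Context: Let $q$ be a power of a prime $p$, $A=\mathbb{F}_q[\theta]$, and $A_+(d)$ the set of monic polynomials in $A$ of degree $d$. Let $t$ be an indeterminate and $\chi_t:A\to\mathbb{F}_q[t]$ the $\mathbb{F}_q$-algebra morphism with $\theta\mapsto t$; $\chi_t(a)^0:=1$. For non-negative integers $\beta,k,d$ let $S_d(\chi_t^\beta,k):=\sum_{a\in A_+(d)}\chi_t(a)^\beta a^k\in A[t]$. It is known that $S_d(\chi_t^\beta,k)=0$ for all sufficiently large $d$, so $z(\chi_t^\beta,x,-k):=\sum_{d\ge0}x^{-d}S_d(\chi_t^\beta,k)$ is a polynomial in $x^{-1}$ over $A[t]$, and one defines $L(\chi_t^\beta,-k):=z(\chi_t^\beta,1,-k)=\sum_{d\ge 0}S_d(\chi_t^\beta,k)\in A[t]$. *)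

theory Defs
  imports "HOL-Computational_Algebra.Polynomial"
begin

text \<open>F_q is a finite field type 'a (q = CARD('a)); A = F_q[theta] is 'a poly;
  A[t] is ('a poly) poly: the outer variable is t, coefficients lie in A.\<close>

definition monics :: "nat \<Rightarrow> 'a::{field,finite} poly set" where
  "monics d = {a. lead_coeff a = 1 \<and> degree a = d}"

text \<open>chi_t : A -> F_q[t] \<subseteq> A[t], theta \<mapsto> t.\<close>
definition chi_t :: "'a::{field,finite} poly \<Rightarrow> 'a poly poly" where
  "chi_t a = map_poly (\<lambda>c. [:c:]) a"

definition theta_At :: "'a::{field,finite} poly poly" where
  "theta_At = [:[:0, 1:]:]"

definition t_At :: "'a::{field,finite} poly poly" where
  "t_At = [:0, 1:]"

definition S_d :: "nat \<Rightarrow> nat \<Rightarrow> nat \<Rightarrow> 'a::{field,finite} poly poly" where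
  "S_d \<beta> k d = (\<Sum>a\<in>monics d. chi_t a ^ \<beta> * [:a ^ k:])"

text \<open>L(chi_t^beta, -k) = sum over d >= 0 of S_d; the sum is over the (finite) support.\<close>
definition L_val :: "nat \<Rightarrow> nat \<Rightarrow> 'a::{field,finite} poly poly" where
  "L_val \<beta> k = (\<Sum>d\<in>{d. (S_d \<beta> k d :: 'a poly poly) \<noteq> 0}. (S_d \<beta> k d :: 'a poly poly))"

end

theory Submission
  imports Defs
begin

text \<open>Write a monic polynomial of degree \<open>d + 1\<close> as \<open>\<theta> b + c\<close> with \<open>b\<close> monic of degree \<open>d\<close>
  and \<open>c\<close> in \<open>\<bbbF>\<^sub>q\<close>. Expand \<open>\<chi>\<^sub>t(\<theta> b + c)\<^sup>\<beta> (\<theta> b + c)\<^sup>k\<close> binomially and sum over \<open>c\<close> first: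
  the power sum of \<open>c\<^sup>m\<close> over \<open>\<bbbF>\<^sub>q\<close> is \<open>-1\<close> if \<open>m > 0\<close> and \<open>q - 1\<close> divides \<open>m\<close>, and \<open>0\<close>
  otherwise. This yields the recursion \<open>S\<^sub>d\<^sub>+\<^sub>1(\<beta>, k) = - \<Sum> (\<beta> choose \<alpha>) (k choose l) t\<^sup>\<alpha> \<theta>\<^sup>l S\<^sub>d(\<alpha>, l)\<close>,
  summed over \<open>(\<alpha>, l) \<in> X\<close>. Since \<open>\<alpha> + l < \<beta> + k\<close> on \<open>X\<close>, it forces \<open>S\<^sub>d(\<beta>, k) = 0\<close> for
  \<open>d > \<beta> + k\<close>, and summing it over \<open>d\<close> gives the formula for \<open>L\<close>, the leading \<open>1\<close> being \<open>S\<^sub>0 = 1\<close>.\<close>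

lemma of_nat_card_UNIV_eq_0: "of_nat (card (UNIV :: 'a::{field,finite} set)) = (0 :: 'a)"
proof -
  have "(\<Sum>c\<in>UNIV. c + (1::'a)) = (\<Sum>c\<in>UNIV. c)"
    by (rule sum.reindex_bij_witness[of _ "\<lambda>c. c - 1" "\<lambda>c. c + 1"]) auto
  then show ?thesis by (simp add: sum.distrib)
qed

lemma card_UNIV_field_ge_2: "card (UNIV :: 'a::{field,finite} set) \<ge> 2"
proof -
  have "card {0, 1::'a} \<le> card (UNIV :: 'a set)"
    by (rule card_mono) simp_all
  then show ?thesis by simp
qed

lemma power_card_UNIV_minus_1:
  fixes x :: "'a::{field,finite}"
  assumes "x \<noteq> 0"
  shows "x ^ (card (UNIV :: 'a set) - 1) = 1"
proof -
  let ?U = "UNIV - {0::'a}"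
  have "(\<Prod>c\<in>?U. x * c) = (\<Prod>c\<in>?U. c)"
    by (rule prod.reindex_bij_witness[of _ "\<lambda>c. c / x" "\<lambda>c. x * c"]) (use assms in auto)
  then have "x ^ card ?U * (\<Prod>c\<in>?U. c) = 1 * (\<Prod>c\<in>?U. c)"
    by (simp add: prod.distrib)
  moreover have "(\<Prod>c\<in>?U. c) \<noteq> 0" by simp
  ultimately show ?thesis by (simp add: card_Diff_singleton)
qed

text \<open>\<open>x\<^sup>r = 1\<close> has at most \<open>r\<close> roots, fewer than the \<open>q - 1\<close> units.\<close>

lemma exists_power_ne_1:
  assumes "0 < r" "r < card (UNIV :: 'a::{field,finite} set) - 1"
  shows "\<exists>g::'a. g \<noteq> 0 \<and> g ^ r \<noteq> 1"
proof (rule ccontr)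
  assume "\<not> ?thesis"
  then have units: "UNIV - {0::'a} \<subseteq> {x. poly (monom 1 r - 1) x = 0}"
    by (auto simp: poly_monom)
  have "coeff (monom (1::'a) r - 1) r = 1"
    using assms(1) by simp
  then have nonzero: "monom (1::'a) r - 1 \<noteq> 0"
    by (metis coeff_0 zero_neq_one)
  have "card (UNIV - {0::'a}) \<le> card {x. poly (monom 1 r - 1) x = (0::'a)}"
    by (rule card_mono[OF _ units]) simp
  also have "\<dots> \<le> degree (monom (1::'a) r - 1)"
    by (rule card_poly_roots_bound[OF nonzero])
  also have "\<dots> \<le> r"
    by (metis degree_diff_le degree_monom_le degree_1 le0)
  finally show False
    using assms(2) by (simp add: card_Diff_singleton)
qed

lemma sum_UNIV_power_eq_0:
  fixes g :: "'a::{field,finite}"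
  assumes "g \<noteq> 0" "g ^ m \<noteq> 1"
  shows "(\<Sum>c\<in>UNIV. c ^ m :: 'a) = 0"
proof -
  have "(\<Sum>c\<in>UNIV. (g * c) ^ m) = (\<Sum>c\<in>UNIV. c ^ m)"
    by (rule sum.reindex_bij_witness[of _ "\<lambda>c. c / g" "\<lambda>c. g * c"]) (use assms(1) in auto)
  then have "g ^ m * (\<Sum>c\<in>UNIV. c ^ m) = 1 * (\<Sum>c\<in>UNIV. c ^ m)"
    by (simp add: power_mult_distrib sum_distrib_left)
  then show ?thesis
    using assms(2) by (metis mult_cancel_right)
qed

lemma sum_UNIV_power:
  "(\<Sum>c\<in>UNIV. (c :: 'a::{field,finite}) ^ m) =
     (if 0 < m \<and> (card (UNIV :: 'a set) - 1) dvd m then -1 else 0)"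
proof -
  let ?q = "card (UNIV :: 'a set)"
  consider "m = 0" | "0 < m" "(?q - 1) dvd m" | "\<not> (?q - 1) dvd m"
    by blast
  then show ?thesis
  proof cases
    case 1
    then show ?thesis using of_nat_card_UNIV_eq_0[where 'a='a] by simp
  next
    case 2
    then obtain j where m: "m = (?q - 1) * j" by blast
    have "(\<Sum>c\<in>UNIV. (c::'a) ^ m) = (\<Sum>c\<in>UNIV - {0}. c ^ m)"
      using 2 by (subst sum.remove[of _ 0]) auto
    also have "\<dots> = (\<Sum>c\<in>UNIV - {0::'a}. 1)"
      by (rule sum.cong) (simp_all add: m power_mult power_card_UNIV_minus_1[simplified])
    also have "\<dots> = of_nat (?q - 1)"
      by (simp add: card_Diff_singleton)
    also have "\<dots> = -1"
      using of_nat_card_UNIV_eq_0[where 'a='a] card_UNIV_field_ge_2[where 'a='a]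
      by (simp add: of_nat_diff)
    finally show ?thesis using 2 by simp
  next
    case 3
    define r where "r = m mod (?q - 1)"
    have "0 < r" "r < ?q - 1"
      using 3 card_UNIV_field_ge_2[where 'a='a] by (auto simp: r_def dvd_eq_mod_eq_0)
    then obtain g :: 'a where g: "g \<noteq> 0" "g ^ r \<noteq> 1"
      using exists_power_ne_1 by blast
    have "g ^ m = g ^ ((?q - 1) * (m div (?q - 1)) + r)"
      unfolding r_def by simp
    also have "\<dots> = (g ^ (?q - 1)) ^ (m div (?q - 1)) * g ^ r"
      by (simp only: power_add power_mult)
    also have "\<dots> = g ^ r"
      by (simp only: power_card_UNIV_minus_1[OF g(1)] power_one mult_1)
    finally have "g ^ m \<noteq> 1"
      using g(2) by simp
    then show ?thesis
      using 3 sum_UNIV_power_eq_0[OF g(1)] by simp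
  qed
qed

lemma monics_0: "monics 0 = {1 :: 'a::{field,finite} poly}"
  by (auto simp: monics_def elim!: degree_eq_zeroE)

lemma monics_Suc:
  "monics (Suc d) = (\<lambda>(b, c). pCons c b) ` (monics d \<times> (UNIV :: 'a::{field,finite} set))"
proof (rule set_eqI, rule iffI)
  fix a :: "'a poly"
  assume a: "a \<in> monics (Suc d)"
  obtain c b where ab: "a = pCons c b" by (cases a)
  with a have "b \<noteq> 0" by (auto simp: monics_def)
  with a ab show "a \<in> (\<lambda>(b, c). pCons c b) ` (monics d \<times> UNIV)"
    by (auto simp: monics_def)
next
  fix a :: "'a poly"
  assume "a \<in> (\<lambda>(b, c). pCons c b) ` (monics d \<times> UNIV)"
  then obtain b c where "a = pCons c b" "b \<in> monics d" by auto
  moreover from this have "b \<noteq> 0" by (auto simp: monics_def)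
  ultimately show "a \<in> monics (Suc d)" by (auto simp: monics_def)
qed

definition binom_monomial :: "nat \<Rightarrow> nat \<Rightarrow> nat \<Rightarrow> nat \<Rightarrow> 'a::{field,finite} poly poly" where
  "binom_monomial \<beta> k \<alpha> l = of_nat (\<beta> choose \<alpha>) * of_nat (k choose l) * t_At ^ \<alpha> * theta_At ^ l"

definition S_summand :: "nat \<Rightarrow> nat \<Rightarrow> 'a::{field,finite} poly \<Rightarrow> 'a poly poly" where
  "S_summand \<beta> k a = chi_t a ^ \<beta> * [:a ^ k:]"

lemma S_d_eq_sum_S_summand: "S_d \<beta> k d = (\<Sum>a\<in>monics d. S_summand \<beta> k a)"
  by (simp add: S_d_def S_summand_def)

lemma S_summand_pCons:
  fixes b :: "'a::{field,finite} poly"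
  shows "S_summand \<beta> k (pCons c b) =
    (\<Sum>(\<alpha>, l)\<in>{..\<beta>} \<times> {..k}. binom_monomial \<beta> k \<alpha> l * S_summand \<alpha> l b
       * [:[:c:]:] ^ (\<beta> - \<alpha> + (k - l)))"
proof -
  have "S_summand \<beta> k (pCons c b) = (t_At * chi_t b + [:[:c:]:]) ^ \<beta> * (theta_At * [:b:] + [:[:c:]:]) ^ k"
    by (simp add: S_summand_def chi_t_def t_At_def theta_At_def map_poly_pCons poly_const_pow
        add.commute)
  also have "\<dots> = (\<Sum>\<alpha>\<le>\<beta>. of_nat (\<beta> choose \<alpha>) * (t_At * chi_t b) ^ \<alpha> * [:[:c:]:] ^ (\<beta> - \<alpha>)) *
      (\<Sum>l\<le>k. of_nat (k choose l) * (theta_At * [:b:]) ^ l * [:[:c:]:] ^ (k - l))"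
    by (simp only: binomial_ring)
  also have "\<dots> = (\<Sum>(\<alpha>, l)\<in>{..\<beta>} \<times> {..k}.
      (of_nat (\<beta> choose \<alpha>) * (t_At * chi_t b) ^ \<alpha> * [:[:c:]:] ^ (\<beta> - \<alpha>)) *
      (of_nat (k choose l) * (theta_At * [:b:]) ^ l * [:[:c:]:] ^ (k - l)))"
    by (simp add: sum_product sum.cartesian_product)
  also have "\<dots> = (\<Sum>(\<alpha>, l)\<in>{..\<beta>} \<times> {..k}. binom_monomial \<beta> k \<alpha> l * S_summand \<alpha> l b
       * [:[:c:]:] ^ (\<beta> - \<alpha> + (k - l)))"
    by (rule sum.cong[OF refl], clarify)
      (simp only: binom_monomial_def S_summand_def power_add power_mult_distrib poly_const_pow
        mult_ac)
  finally show ?thesis .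
qed

lemma S_d_Suc_power_sums:
  "(S_d \<beta> k (Suc d) :: 'a::{field,finite} poly poly) =
   (\<Sum>(\<alpha>, l)\<in>{..\<beta>} \<times> {..k}. binom_monomial \<beta> k \<alpha> l * S_d \<alpha> l d *
      [:[:\<Sum>c\<in>UNIV. (c::'a) ^ (\<beta> - \<alpha> + (k - l)):]:])"
proof -
  have inj: "inj_on (\<lambda>(b, c). pCons c b) (monics d \<times> (UNIV :: 'a set))"
    by (auto simp: inj_on_def)
  have power_sum: "(\<Sum>c\<in>UNIV. [:[:c:]:] ^ m) = [:[:\<Sum>c\<in>UNIV. (c::'a) ^ m:]:]" for m
    by (simp add: poly_const_pow flip: sum_to_poly)
  have "(S_d \<beta> k (Suc d) :: 'a poly poly) =
      (\<Sum>b\<in>monics d. \<Sum>c\<in>UNIV. S_summand \<beta> k (pCons c b))"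
    unfolding S_d_eq_sum_S_summand monics_Suc
    by (subst sum.reindex[OF inj]) (simp add: sum.cartesian_product split_beta)
  also have "\<dots> = (\<Sum>(\<alpha>, l)\<in>{..\<beta>} \<times> {..k}. \<Sum>b\<in>monics d. \<Sum>c\<in>UNIV.
      binom_monomial \<beta> k \<alpha> l * S_summand \<alpha> l b * [:[:c:]:] ^ (\<beta> - \<alpha> + (k - l)))"
    by (simp only: S_summand_pCons sum.swap[of _ UNIV "{..\<beta>} \<times> {..k}"]
        sum.swap[of _ "monics d" "{..\<beta>} \<times> {..k}"] split_def)
  also have "\<dots> = (\<Sum>(\<alpha>, l)\<in>{..\<beta>} \<times> {..k}. binom_monomial \<beta> k \<alpha> l * S_d \<alpha> l d *
      [:[:\<Sum>c\<in>UNIV. (c::'a) ^ (\<beta> - \<alpha> + (k - l)):]:])"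
    by (rule sum.cong[OF refl], clarify)
      (simp only: S_d_eq_sum_S_summand power_sum[symmetric] mult.assoc sum_product,
        simp only: sum_distrib_left)
  finally show ?thesis .
qed

definition recursion_indices :: "nat \<Rightarrow> nat \<Rightarrow> nat \<Rightarrow> (nat \<times> nat) set" where
  "recursion_indices q \<beta> k = {(\<alpha>, l). \<alpha> \<le> \<beta> \<and> l \<le> k \<and> (\<alpha>, l) \<noteq> (\<beta>, k)
     \<and> (q - 1) dvd (\<beta> - \<alpha> + (k - l))}"

lemma recursion_indices_less:
  "(\<alpha>, l) \<in> recursion_indices q \<beta> k \<Longrightarrow> \<alpha> + l < \<beta> + k"
  by (auto simp: recursion_indices_def)

lemma recursion_indices_int:
  assumes "1 \<le> q"
  shows "recursion_indices q \<beta> k = {(\<alpha>, l). \<alpha> \<le> \<beta> \<and> l \<le> k \<and> (\<alpha>, l) \<noteq> (\<beta>, k)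
     \<and> (int q - 1) dvd (int (\<beta> + k) - int (\<alpha> + l))}"
proof -
  have "(int q - 1) dvd (int (\<beta> + k) - int (\<alpha> + l)) \<longleftrightarrow> (q - 1) dvd (\<beta> - \<alpha> + (k - l))"
    if "\<alpha> \<le> \<beta>" "l \<le> k" for \<alpha> l
    using that assms by (simp add: of_nat_diff flip: int_dvd_int_iff)
  then show ?thesis
    by (auto simp: recursion_indices_def)
qed

lemma S_d_Suc:
  "(S_d \<beta> k (Suc d) :: 'a::{field,finite} poly poly) =
   - (\<Sum>(\<alpha>, l)\<in>recursion_indices (card (UNIV :: 'a set)) \<beta> k. binom_monomial \<beta> k \<alpha> l * S_d \<alpha> l d)"
proof -
  let ?I = "recursion_indices (card (UNIV :: 'a set)) \<beta> k"
  have minus_one: "[:-1:] = (-1 :: 'a poly)"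
    by (simp only: one_pCons minus_pCons minus_zero)
  have "(S_d \<beta> k (Suc d) :: 'a poly poly) = (\<Sum>p\<in>{..\<beta>} \<times> {..k}.
      if p \<in> ?I then - (case p of (\<alpha>, l) \<Rightarrow> binom_monomial \<beta> k \<alpha> l * S_d \<alpha> l d) else 0)"
    unfolding S_d_Suc_power_sums sum_UNIV_power
    by (rule sum.cong) (auto simp: recursion_indices_def minus_one split: if_splits)
  also have "\<dots> = - (\<Sum>(\<alpha>, l)\<in>?I. binom_monomial \<beta> k \<alpha> l * S_d \<alpha> l d)"
  proof -
    have "?I \<subseteq> {..\<beta>} \<times> {..k}"
      by (auto simp: recursion_indices_def)
    then show ?thesis
      by (subst sum.inter_restrict[symmetric]) (simp_all add: Int_absorb1 sum_negf split_def)
  qed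
  finally show ?thesis .
qed

lemma S_d_0: "S_d \<beta> k 0 = 1"
  by (simp add: S_d_def monics_0 chi_t_def)

lemma S_d_eq_0: "\<beta> + k < d \<Longrightarrow> S_d \<beta> k d = 0"
proof (induction d arbitrary: \<beta> k)
  case (Suc d)
  then show ?case
    by (auto simp: S_d_Suc dest!: recursion_indices_less intro!: sum.neutral)
qed simp

lemma L_val_eq_sum: "\<beta> + k < n \<Longrightarrow> L_val \<beta> k = (\<Sum>d<n. S_d \<beta> k d)"
  unfolding L_val_def by (rule sum.mono_neutral_left) (auto, metis S_d_eq_0 less_le_trans not_less)

lemma L_val_recursion:
  "(L_val \<beta> k :: 'a::{field,finite} poly poly) =
   1 - (\<Sum>(\<alpha>, l)\<in>recursion_indices (card (UNIV :: 'a set)) \<beta> k. binom_monomial \<beta> k \<alpha> l * L_val \<alpha> l)"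
proof -
  let ?I = "recursion_indices (card (UNIV :: 'a set)) \<beta> k"
  let ?n = "\<beta> + k"
  have "(L_val \<beta> k :: 'a poly poly) = S_d \<beta> k 0 + (\<Sum>d<?n. S_d \<beta> k (Suc d))"
    by (subst L_val_eq_sum[of \<beta> k "Suc ?n"], simp, rule sum.lessThan_Suc_shift)
  also have "\<dots> = 1 - (\<Sum>(\<alpha>, l)\<in>?I. binom_monomial \<beta> k \<alpha> l * (\<Sum>d<?n. S_d \<alpha> l d))"
    by (simp add: S_d_0 S_d_Suc sum_negf sum_distrib_left sum.swap[of _ "{..<?n}"] split_def)
  also have "\<dots> = 1 - (\<Sum>(\<alpha>, l)\<in>?I. binom_monomial \<beta> k \<alpha> l * L_val \<alpha> l)"
    by (intro arg_cong2[of _ _ _ _ "(-)"] sum.cong refl)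
      (auto simp: L_val_eq_sum dest: recursion_indices_less)
  finally show ?thesis .
qed

theorem corollary2p0p2:
  fixes \<beta> k :: nat
  defines "q \<equiv> card (UNIV :: 'a::{field,finite} set)"
  defines "X \<equiv> {(\<alpha>, l). \<alpha> \<le> \<beta> \<and> l \<le> k \<and> (\<alpha>, l) \<noteq> (\<beta>, k)
                 \<and> (int q - 1) dvd (int (\<beta> + k) - int (\<alpha> + l))}"
  shows "(L_val 0 0 :: 'a poly poly) = 1 \<and>
         (L_val \<beta> k :: 'a poly poly) = 1 - (\<Sum>(\<alpha>, l)\<in>X.
            of_nat (\<beta> choose \<alpha>) * of_nat (k choose l) * t_At ^ \<alpha> * theta_At ^ l * L_val \<alpha> l)"
proof
  show "(L_val 0 0 :: 'a poly poly) = 1"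
    using L_val_eq_sum[of 0 0 1] by (simp add: S_d_0)
  have "X = recursion_indices q \<beta> k"
    using card_UNIV_field_ge_2[where 'a='a] by (simp add: X_def q_def recursion_indices_int)
  then show "(L_val \<beta> k :: 'a poly poly) = 1 - (\<Sum>(\<alpha>, l)\<in>X.
            of_nat (\<beta> choose \<alpha>) * of_nat (k choose l) * t_At ^ \<alpha> * theta_At ^ l * L_val \<alpha> l)"
    unfolding L_val_recursion[of \<beta> k] q_def by (simp add: binom_monomial_def)
qed

end
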